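(* Let $E=\{ax^4+by^4+cx^2y^2:a,b,c\in\mathbb{R}\}$ with the sup norm over $[-1,1]^2$. Then $$D_{\mathbb{R},4}(E):=\sup\left\{\frac{(|a|^{8/5}+|b|^{8/5}+|c|^{8/5})^{5/8}}{\|ax^4+by^4+cx^2y^2\|}:(a,b,c)\neq0\right\}=\left(2+3^{8/5}\right)^{5/8}\approx3.610,$$ attained at $\pm(x^4+y^4-3x^2y^2)$. In particular $D_{\mathbb{R},4}\ge D_{\mathbb{R},4}(\ell_\infty^2)\ge(2+3^{8/5})^{5/8}\approx3.610$.
   Context: $\ell_\infty^n$ is $\mathbb{R}^n$ with the sup norm; for a polynomial $P$ on $\ell_\infty^n$, $\|P\|=\sup_{x\in[-1,1]^n}|P(x)|$. For $P(x)=\sum_{|\alpha|=m}a_\alpha x^\alpha$, $D_{\mathbb{R},m}(\ell_\infty^n)=\sup\{(\sum_{|\alpha|=m}|a_\alpha|^{\frac{2m}{m+1}})^{\frac{m+1}{2m}}/\|P\|: P\ne 0 \text{ real $m$-homogeneous on }\ell_\infty^n\}$ and $D_{\mathbb{R},m}=\sup_nD_{\mathbb{R},m}(\ell_\infty^n)$ is the optimal constant in the real polynomial Bohnenblust–Hille inequality. *)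

theory Defs
  imports "HOL-Analysis.Analysis"
begin

definition polyE :: "real \<Rightarrow> real \<Rightarrow> real \<Rightarrow> real \<Rightarrow> real \<Rightarrow> real" where
  "polyE a b c x y = a * x ^ 4 + b * y ^ 4 + c * x ^ 2 * y ^ 2"

definition normE :: "real \<Rightarrow> real \<Rightarrow> real \<Rightarrow> real" where
  "normE a b c = Sup {\<bar>polyE a b c x y\<bar> | x y. \<bar>x\<bar> \<le> 1 \<and> \<bar>y\<bar> \<le> 1}"

definition ratioE :: "real \<Rightarrow> real \<Rightarrow> real \<Rightarrow> real" where
  "ratioE a b c =
     (\<bar>a\<bar> powr (8/5) + \<bar>b\<bar> powr (8/5) + \<bar>c\<bar> powr (8/5)) powr (5/8) / normE a b c"

definition D_E :: ereal where
  "D_E = (SUP v \<in> {v :: real \<times> real \<times> real. v \<noteq> (0, 0, 0)}.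
             ereal (ratioE (fst v) (fst (snd v)) (snd (snd v))))"

text \<open>Multi-indices alpha in N^n with |alpha| = m, encoded as functions nat => nat
  vanishing outside {..<n}.\<close>
definition multi_idx :: "nat \<Rightarrow> nat \<Rightarrow> (nat \<Rightarrow> nat) set" where
  "multi_idx n m = {\<alpha>. (\<forall>i\<ge>n. \<alpha> i = 0) \<and> sum \<alpha> {..<n} = m}"

definition hom_poly :: "nat \<Rightarrow> nat \<Rightarrow> ((nat \<Rightarrow> nat) \<Rightarrow> real) \<Rightarrow> (nat \<Rightarrow> real) \<Rightarrow> real" where
  "hom_poly n m a x = (\<Sum>\<alpha>\<in>multi_idx n m. a \<alpha> * (\<Prod>i<n. x i ^ \<alpha> i))"

definition hom_poly_norm :: "nat \<Rightarrow> nat \<Rightarrow> ((nat \<Rightarrow> nat) \<Rightarrow> real) \<Rightarrow> real" where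
  "hom_poly_norm n m a = Sup {\<bar>hom_poly n m a x\<bar> | x. \<forall>i<n. \<bar>x i\<bar> \<le> 1}"

definition BH_ratio :: "nat \<Rightarrow> nat \<Rightarrow> ((nat \<Rightarrow> nat) \<Rightarrow> real) \<Rightarrow> real" where
  "BH_ratio n m a =
     (\<Sum>\<alpha>\<in>multi_idx n m. \<bar>a \<alpha>\<bar> powr (2 * real m / (real m + 1)))
        powr ((real m + 1) / (2 * real m)) / hom_poly_norm n m a"

definition D_Rmn :: "nat \<Rightarrow> nat \<Rightarrow> ereal" where
  "D_Rmn m n = (SUP a \<in> {a. \<exists>\<alpha>\<in>multi_idx n m. a \<alpha> \<noteq> 0}. ereal (BH_ratio n m a))"

definition D_Rm :: "nat \<Rightarrow> ereal" where
  "D_Rm m = (SUP n. D_Rmn m n)"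

end

theory Submission
  imports Defs
begin

(* Write N = normE a b c for the sup norm of P = a x^4 + b y^4 + c x^2 y^2 on [-1,1]^2.
   Upper bound: evaluating P at (1,0), (0,1), (1,1) gives |a|, |b|, |a+b+c| <= N, hence
   |c| <= 3N, and an elementary l^p estimate yields
   (|a|^(8/5) + |b|^(8/5) + |c|^(8/5))^(5/8) <= (2 + 3^(8/5))^(5/8) N.
   Lower bound: P0 = x^4 + y^4 - 3x^2y^2 has norm 1, because u^2 + v^2 - 3uv lies in
   [-1,1] for u, v in [0,1], so the bound is attained at +-P0 and D_E equals it.
   Finally E sits isometrically inside the 4-homogeneous polynomials on l_infty^2:
   parametrizing the multi-indices of binary forms of degree m by the exponent of the
   first variable, the coefficient vector of P has the same Bohnenblust-Hille ratio as
   (a,b,c). *)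

text \<open>Crude bound making the set of values bounded, so its supremum is well behaved.\<close>
lemma polyE_bound:
  assumes "\<bar>x\<bar> \<le> 1" "\<bar>y\<bar> \<le> 1"
  shows "\<bar>polyE a b c x y\<bar> \<le> \<bar>a\<bar> + \<bar>b\<bar> + \<bar>c\<bar>"
proof -
  have "\<bar>x\<bar> ^ 4 \<le> 1" "\<bar>y\<bar> ^ 4 \<le> 1" "\<bar>x\<bar>\<^sup>2 \<le> 1" "\<bar>y\<bar>\<^sup>2 \<le> 1"
    using assms abs_ge_zero power_le_one by metis+
  then have "\<bar>x\<bar> ^ 4 \<le> 1" "\<bar>y\<bar> ^ 4 \<le> 1" "\<bar>x\<bar>\<^sup>2 * \<bar>y\<bar>\<^sup>2 \<le> 1"
    by (simp_all add: mult_le_one)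
  then have "\<bar>a * x ^ 4\<bar> \<le> \<bar>a\<bar>" "\<bar>b * y ^ 4\<bar> \<le> \<bar>b\<bar>" "\<bar>c * x\<^sup>2 * y\<^sup>2\<bar> \<le> \<bar>c\<bar>"
    by (simp_all add: abs_mult power_abs mult_left_le mult.assoc)
  then show ?thesis unfolding polyE_def by linarith
qed

lemma le_normE:
  assumes "\<bar>x\<bar> \<le> 1" "\<bar>y\<bar> \<le> 1"
  shows "\<bar>polyE a b c x y\<bar> \<le> normE a b c"
  unfolding normE_def
proof (rule cSup_upper)
  show "bdd_above {\<bar>polyE a b c x y\<bar> | x y. \<bar>x\<bar> \<le> 1 \<and> \<bar>y\<bar> \<le> 1}"
    by (rule bdd_aboveI[where M = "\<bar>a\<bar> + \<bar>b\<bar> + \<bar>c\<bar>"]) (auto intro: polyE_bound)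
qed (use assms in blast)

text \<open>The coefficients of P are controlled by its norm (evaluate at (1,0), (0,1), (1,1)).\<close>
lemma coeff_bounds_normE:
  "\<bar>a\<bar> \<le> normE a b c" "\<bar>b\<bar> \<le> normE a b c" "\<bar>c\<bar> \<le> 3 * normE a b c"
proof -
  have "\<bar>a + b + c\<bar> \<le> normE a b c" using le_normE[of 1 1 a b c] by (simp add: polyE_def)
  moreover show "\<bar>a\<bar> \<le> normE a b c" using le_normE[of 1 0 a b c] by (simp add: polyE_def)
  moreover show "\<bar>b\<bar> \<le> normE a b c" using le_normE[of 0 1 a b c] by (simp add: polyE_def)
  ultimately show "\<bar>c\<bar> \<le> 3 * normE a b c" by linarith
qed

lemma normE_uminus: "normE (- a) (- b) (- c) = normE a b c"
proof -
  have "\<bar>polyE (- a) (- b) (- c) x y\<bar> = \<bar>polyE a b c x y\<bar>" for x y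
    by (simp add: polyE_def abs_minus_commute minus_add_distrib)
  then show ?thesis unfolding normE_def by simp
qed

lemma ratioE_uminus: "ratioE (- a) (- b) (- c) = ratioE a b c"
  by (simp add: ratioE_def normE_uminus)

lemma lp_norm_le:
  fixes a b c N p :: real
  assumes "p > 0" "\<bar>a\<bar> \<le> N" "\<bar>b\<bar> \<le> N" "\<bar>c\<bar> \<le> 3 * N"
  shows "(\<bar>a\<bar> powr p + \<bar>b\<bar> powr p + \<bar>c\<bar> powr p) powr (1/p) \<le> (2 + 3 powr p) powr (1/p) * N"
proof -
  have N0: "N \<ge> 0" using assms(2) by linarith
  have "\<bar>a\<bar> powr p + \<bar>b\<bar> powr p + \<bar>c\<bar> powr p \<le> N powr p + N powr p + (3 * N) powr p"
    using assms by (intro add_mono powr_mono2) auto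
  also have "\<dots> = (2 + 3 powr p) * N powr p"
    using N0 by (simp add: powr_mult ring_distribs)
  finally have "(\<bar>a\<bar> powr p + \<bar>b\<bar> powr p + \<bar>c\<bar> powr p) powr (1/p)
      \<le> ((2 + 3 powr p) * N powr p) powr (1/p)"
    using assms(1) by (intro powr_mono2) auto
  also have "\<dots> = (2 + 3 powr p) powr (1/p) * N"
    using N0 assms(1) by (simp add: powr_mult powr_powr)
  finally show ?thesis .
qed

theorem ratioE_le: "ratioE a b c \<le> (2 + 3 powr (8/5)) powr (5/8)"
proof (cases "normE a b c = 0")
  case True
  then show ?thesis by (simp add: ratioE_def)
next
  case False
  then have "normE a b c > 0" using coeff_bounds_normE(1)[of a b c] by linarith
  moreover have "(\<bar>a\<bar> powr (8/5) + \<bar>b\<bar> powr (8/5) + \<bar>c\<bar> powr (8/5)) powr (5/8)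
      \<le> (2 + 3 powr (8/5)) powr (5/8) * normE a b c"
    using lp_norm_le[of "8/5" a "normE a b c" b c] coeff_bounds_normE by simp
  ultimately show ?thesis by (simp add: ratioE_def pos_divide_le_eq)
qed

text \<open>With u = x^2, v = y^2 this is the statement that x^4 + y^4 - 3x^2y^2 has norm <= 1.\<close>
lemma quadratic_form_bound:
  fixes u v :: real
  assumes "0 \<le> u" "u \<le> 1" "0 \<le> v" "v \<le> 1"
  shows "\<bar>u\<^sup>2 + v\<^sup>2 - 3 * u * v\<bar> \<le> 1"
proof -
  have uv: "0 \<le> u * v" "u * v \<le> 1" using assms by (simp_all add: mult_le_one)
  have "u\<^sup>2 + v\<^sup>2 - 3 * u * v \<ge> -1"
    using uv sum_squares_bound[of u v] by linarith
  moreover have "u\<^sup>2 + v\<^sup>2 - 3 * u * v \<le> 1"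
  proof -
    text \<open>The smaller square is at most uv and the larger at most 1.\<close>
    have "min u v * min u v \<le> u * v" "max u v * max u v \<le> 1"
      using assms by (auto simp: min_def max_def mult_mono mult_le_one)
    then show ?thesis using uv by (auto simp: min_def max_def power2_eq_square split: if_splits)
  qed
  ultimately show ?thesis by simp
qed

lemma normE_extremal: "normE 1 1 (-3) = 1"
  unfolding normE_def
proof (rule cSup_eq_maximum)
  show "1 \<in> {\<bar>polyE 1 1 (-3) x y\<bar> | x y. \<bar>x\<bar> \<le> 1 \<and> \<bar>y\<bar> \<le> 1}"
    by (rule CollectI, rule exI[of _ 1], rule exI[of _ 0]) (simp add: polyE_def)
next
  fix z assume "z \<in> {\<bar>polyE 1 1 (-3) x y\<bar> | x y. \<bar>x\<bar> \<le> 1 \<and> \<bar>y\<bar> \<le> 1}"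
  then obtain x y where z: "z = \<bar>polyE 1 1 (-3) x y\<bar>" "\<bar>x\<bar> \<le> 1" "\<bar>y\<bar> \<le> 1" by blast
  have "x\<^sup>2 \<le> 1" "y\<^sup>2 \<le> 1" using z by (simp_all add: abs_square_le_1)
  then have "\<bar>(x\<^sup>2)\<^sup>2 + (y\<^sup>2)\<^sup>2 - 3 * x\<^sup>2 * y\<^sup>2\<bar> \<le> 1" by (intro quadratic_form_bound) auto
  then show "z \<le> 1" unfolding z polyE_def by (simp add: power_mult[symmetric] mult.assoc)
qed

lemma ratioE_extremal: "ratioE 1 1 (-3) = (2 + 3 powr (8/5)) powr (5/8)"
  by (simp add: ratioE_def normE_extremal)

definition bin_idx :: "nat \<Rightarrow> nat \<Rightarrow> nat \<Rightarrow> nat" where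
  "bin_idx m k = (\<lambda>i. if i = 0 then k else if i = 1 then m - k else 0)"

lemma multi_idx_two: "multi_idx 2 m = bin_idx m ` {0..m}"
proof (intro equalityI subsetI)
  fix \<alpha> assume "\<alpha> \<in> multi_idx 2 m"
  then have z: "\<forall>i\<ge>2. \<alpha> i = 0" and s: "\<alpha> 0 + \<alpha> 1 = m"
    by (auto simp: multi_idx_def numeral_2_eq_2 lessThan_Suc)
  have "\<alpha> = bin_idx m (\<alpha> 0)"
  proof
    fix i show "\<alpha> i = bin_idx m (\<alpha> 0) i"
      using z s by (cases "i = 0"; cases "i = 1") (auto simp: bin_idx_def)
  qed
  then show "\<alpha> \<in> bin_idx m ` {0..m}" using s by force
qed (auto simp: multi_idx_def bin_idx_def numeral_2_eq_2 lessThan_Suc)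

lemma sum_multi_idx_two:
  "(\<Sum>\<alpha>\<in>multi_idx 2 m. f \<alpha>) = (\<Sum>k\<in>{0..m}. f (bin_idx m k))"
proof -
  have "inj_on (bin_idx m) {0..m}"
    by (rule inj_onI) (metis bin_idx_def)
  then show ?thesis unfolding multi_idx_two by (simp add: sum.reindex)
qed

lemma hom_poly_two:
  "hom_poly 2 m a x = (\<Sum>k\<in>{0..m}. a (bin_idx m k) * x 0 ^ k * x 1 ^ (m - k))"
  unfolding hom_poly_def sum_multi_idx_two
  by (simp add: bin_idx_def numeral_2_eq_2 lessThan_Suc mult_ac)

definition coeffE :: "real \<Rightarrow> real \<Rightarrow> real \<Rightarrow> (nat \<Rightarrow> nat) \<Rightarrow> real" where
  "coeffE a b c \<alpha> = (if \<alpha> 0 = 4 then a else if \<alpha> 0 = 0 then b else if \<alpha> 0 = 2 then c else 0)"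

lemma atLeast0_4: "{0..4::nat} = {0, 1, 2, 3, 4}" by auto

lemma hom_poly_coeffE: "hom_poly 2 4 (coeffE a b c) x = polyE a b c (x 0) (x 1)"
  unfolding hom_poly_two atLeast0_4 by (simp add: coeffE_def bin_idx_def polyE_def)

lemma hom_poly_norm_coeffE: "hom_poly_norm 2 4 (coeffE a b c) = normE a b c"
proof -
  have "{\<bar>hom_poly 2 4 (coeffE a b c) x\<bar> | x. \<forall>i<2. \<bar>x i\<bar> \<le> 1}
      = {\<bar>polyE a b c x y\<bar> | x y. \<bar>x\<bar> \<le> 1 \<and> \<bar>y\<bar> \<le> 1}"
  proof (intro equalityI subsetI)
    fix z assume "z \<in> {\<bar>hom_poly 2 4 (coeffE a b c) x\<bar> | x. \<forall>i<2. \<bar>x i\<bar> \<le> 1}"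
    then obtain x where "z = \<bar>hom_poly 2 4 (coeffE a b c) x\<bar>" "\<forall>i<2. \<bar>x i\<bar> \<le> 1"
      by blast
    then have "z = \<bar>polyE a b c (x 0) (x 1)\<bar>" "\<bar>x 0\<bar> \<le> 1" "\<bar>x 1\<bar> \<le> 1"
      by (simp_all add: hom_poly_coeffE)
    then show "z \<in> {\<bar>polyE a b c x y\<bar> | x y. \<bar>x\<bar> \<le> 1 \<and> \<bar>y\<bar> \<le> 1}" by blast
  next
    fix z assume "z \<in> {\<bar>polyE a b c x y\<bar> | x y. \<bar>x\<bar> \<le> 1 \<and> \<bar>y\<bar> \<le> 1}"
    then obtain x y where xy: "z = \<bar>polyE a b c x y\<bar>" "\<bar>x\<bar> \<le> 1" "\<bar>y\<bar> \<le> 1" by blast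
    define w where "w = (\<lambda>i::nat. if i = 0 then x else y)"
    have "z = \<bar>hom_poly 2 4 (coeffE a b c) w\<bar>" "\<forall>i<2. \<bar>w i\<bar> \<le> 1"
      using xy by (simp_all add: hom_poly_coeffE w_def)
    then show "z \<in> {\<bar>hom_poly 2 4 (coeffE a b c) x\<bar> | x. \<forall>i<2. \<bar>x i\<bar> \<le> 1}" by blast
  qed
  then show ?thesis unfolding hom_poly_norm_def normE_def by simp
qed

lemma BH_ratio_coeffE: "BH_ratio 2 4 (coeffE a b c) = ratioE a b c"
proof -
  have "(\<Sum>\<alpha>\<in>multi_idx 2 4. \<bar>coeffE a b c \<alpha>\<bar> powr (8/5))
      = \<bar>a\<bar> powr (8/5) + \<bar>b\<bar> powr (8/5) + \<bar>c\<bar> powr (8/5)"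
    unfolding sum_multi_idx_two atLeast0_4 by (simp add: coeffE_def bin_idx_def)
  then show ?thesis
    by (simp add: BH_ratio_def ratioE_def hom_poly_norm_coeffE)
qed

lemma coeffE_nonzero:
  assumes "(a, b, c) \<noteq> (0, 0, 0)"
  shows "\<exists>\<alpha>\<in>multi_idx 2 4. coeffE a b c \<alpha> \<noteq> 0"
proof -
  have idx: "bin_idx 4 k \<in> multi_idx 2 4" if "k \<le> 4" for k
    unfolding multi_idx_two using that by simp
  have "coeffE a b c (bin_idx 4 4) = a" "coeffE a b c (bin_idx 4 0) = b"
       "coeffE a b c (bin_idx 4 2) = c"
    by (simp_all add: coeffE_def bin_idx_def)
  then show ?thesis using assms idx[of 4] idx[of 0] idx[of 2] by force
qed

lemma D_E_le_D_Rmn: "D_E \<le> D_Rmn 4 2"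
  unfolding D_E_def D_Rmn_def
proof (rule SUP_least)
  fix v :: "real \<times> real \<times> real" assume "v \<in> {v. v \<noteq> (0, 0, 0)}"
  then obtain a b c where v: "v = (a, b, c)" "(a, b, c) \<noteq> (0, 0, 0)" by (cases v) auto
  then have "coeffE a b c \<in> {a. \<exists>\<alpha>\<in>multi_idx 2 4. a \<alpha> \<noteq> 0}"
    using coeffE_nonzero by blast
  then show "ereal (ratioE (fst v) (fst (snd v)) (snd (snd v)))
      \<le> (SUP a\<in>{a. \<exists>\<alpha>\<in>multi_idx 2 4. a \<alpha> \<noteq> 0}. ereal (BH_ratio 2 4 a))"
    by (rule SUP_upper2) (simp add: v BH_ratio_coeffE)
qed

theorem mainTheorem9:
  shows "D_E = ereal ((2 + 3 powr (8/5)) powr (5/8))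
    \<and> ratioE 1 1 (-3) = (2 + 3 powr (8/5)) powr (5/8)
    \<and> ratioE (-1) (-1) 3 = (2 + 3 powr (8/5)) powr (5/8)
    \<and> D_Rmn 4 2 \<le> D_Rm 4
    \<and> ereal ((2 + 3 powr (8/5)) powr (5/8)) \<le> D_Rmn 4 2"
proof -
  have D_E: "D_E = ereal ((2 + 3 powr (8/5)) powr (5/8))"
    unfolding D_E_def
  proof (rule antisym)
    show "(SUP v\<in>{v. v \<noteq> (0, 0, 0)}. ereal (ratioE (fst v) (fst (snd v)) (snd (snd v))))
        \<le> ereal ((2 + 3 powr (8/5)) powr (5/8))"
      by (rule SUP_least) (simp add: ratioE_le)
    show "ereal ((2 + 3 powr (8/5)) powr (5/8))
        \<le> (SUP v\<in>{v. v \<noteq> (0, 0, 0)}. ereal (ratioE (fst v) (fst (snd v)) (snd (snd v))))"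
      by (rule SUP_upper2[where i = "(1, 1, -3)"]) (simp_all add: ratioE_extremal)
  qed
  have "ratioE (-1) (-1) 3 = ratioE 1 1 (-3)"
    using ratioE_uminus[of 1 1 "-3"] by simp
  moreover have "D_Rmn 4 2 \<le> D_Rm 4"
    unfolding D_Rm_def by (rule SUP_upper) simp
  ultimately show ?thesis
    using D_E D_E_le_D_Rmn ratioE_extremal by simp
qed

end
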